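(* Let $A(x)=\sin^2(2\pi x)$, $\hat m(A)=\frac{A(1/3)+A(2/3)}{2}$, $\eta(x)=\frac{x}{4}+\frac12$, $F(x)=A(\frac{x}{2})+A(\frac{x}{4}+\frac12)$, and $V_2(x)=\lim_{n\to\infty}\sum_{i=0}^{n-1}[F(\eta^i(x))-2\hat m(A)]$ for $x\in[0,1]$. For each $N$ let $$\varphi_N(x)=\sum_{i=0}^{N}\frac{2\pi}{4^i}\left(\sin(\pi\eta^i(x))\cos(\pi\eta^i(x))+\frac12\sin\left(\frac{\pi\eta^i(x)}{2}\right)\cos\left(\frac{\pi\eta^i(x)}{2}\right)\right).$$ Then $V_2'(x)=\varphi_N(x)+\xi_N(x)$ with $|\xi_N(x)|\le 3\pi\sum_{i=N}^{\infty}\frac{1}{4^i}=\frac{\pi}{4^{N-1}}$ for all $x\in[0,1]$.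
   Context: $\eta^i$ denotes the $i$-th iterate of $\eta$, with $\eta^0$ the identity. *)

theory Defs
  imports Complex_Main
begin

definition A :: "real \<Rightarrow> real" where
  "A x = (sin (2 * pi * x))^2"

definition mhat :: real where
  "mhat = (A (1/3) + A (2/3)) / 2"

definition eta :: "real \<Rightarrow> real" where
  "eta x = x / 4 + 1 / 2"

definition F :: "real \<Rightarrow> real" where
  "F x = A (x / 2) + A (x / 4 + 1 / 2)"

definition V2 :: "real \<Rightarrow> real" where
  "V2 x = lim (\<lambda>n. \<Sum>i<n. F ((eta ^^ i) x) - 2 * mhat)"

definition phi :: "nat \<Rightarrow> real \<Rightarrow> real" where
  "phi N x = (\<Sum>i\<le>N. (2 * pi / 4 ^ i) *
      (sin (pi * (eta ^^ i) x) * cos (pi * (eta ^^ i) x)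
       + 1/2 * sin (pi * (eta ^^ i) x / 2) * cos (pi * (eta ^^ i) x / 2)))"

end

theory Submission
  imports Defs "HOL-Analysis.Analysis"
begin

text \<open>Since \<open>\<eta>\<close> contracts towards its fixed point \<open>2/3\<close> with ratio \<open>1/4\<close>, the \<open>i\<close>-th term
  \<open>F(\<eta>\<^sup>i x) - 2 m(A)\<close> of the series defining \<open>V\<^sub>2\<close> has derivative \<open>4\<^sup>-\<^sup>i F'(\<eta>\<^sup>i x)\<close>, and
  \<open>|F'| \<le> 3\<pi>\<close>. By the Weierstrass M-test the differentiated series converges uniformly,
  and the series itself converges at \<open>2/3\<close>, where every term vanishes; hence it may be
  differentiated termwise. The remainder after the first \<open>N + 1\<close> terms, which form
  \<open>\<phi>\<^sub>N\<close>, is bounded by the geometric tail \<open>3\<pi> \<Sum>\<^sub>i\<^sub>>\<^sub>N 4\<^sup>-\<^sup>i\<close>.\<close>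

lemma sums_geometric_shift:
  fixes q :: "'a :: {real_normed_field, banach}"
  assumes "norm q < 1"
  shows "(\<lambda>i. q ^ (i + n)) sums (q ^ n / (1 - q))"
  using sums_mult[OF geometric_sums[OF assms], of "q ^ n"]
  by (simp add: power_add mult.commute)

lemma sums_geometric_tail:
  fixes q :: "'a :: {real_normed_field, banach}"
  assumes "norm q < 1"
  shows "(\<lambda>i. if n \<le> i then q ^ i else 0) sums (q ^ n / (1 - q))"
proof -
  have "(\<lambda>i. (\<lambda>i. if n \<le> i then q ^ i else 0) (i + n)) sums (q ^ n / (1 - q))"
    using sums_geometric_shift[OF assms] by simp
  then have "(\<lambda>i. if n \<le> i then q ^ i else 0) sums
      (q ^ n / (1 - q) + (\<Sum>i<n. if n \<le> i then q ^ i else 0))"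
    by (rule sums_iff_shift[THEN iffD1])
  then show ?thesis
    by simp
qed

lemma norm_suminf_minus_sum_le:
  fixes f :: "nat \<Rightarrow> 'a :: banach"
  assumes "\<And>i. norm (f i) \<le> g i" and "summable g"
  shows "norm (suminf f - (\<Sum>i<n. f i)) \<le> (\<Sum>i. g (i + n))"
proof -
  have "summable f"
    using assms summable_comparison_test' by blast
  then have "suminf f - (\<Sum>i<n. f i) = (\<Sum>i. f (i + n))"
    by (simp add: suminf_minus_initial_segment)
  also have "norm \<dots> \<le> (\<Sum>i. g (i + n))"
    using assms by (intro norm_suminf_le) (auto simp: summable_iff_shift)
  finally show ?thesis .
qed

lemma funpow_eta: "(eta ^^ n) x = 2/3 + (x - 2/3) / 4 ^ n"
  by (induction n) (auto simp: eta_def field_simps)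

lemma F_eq_sin_squares: "F y = sin (pi * y) ^ 2 + sin (pi * y / 2) ^ 2"
proof -
  have "2 * pi * (y / 4 + 1 / 2) = pi * y / 2 + pi"
    by (simp add: field_simps)
  then show ?thesis
    by (simp add: F_def A_def)
qed

lemma has_real_derivative_F:
  "(F has_real_derivative
     2 * pi * (sin (pi * y) * cos (pi * y) + 1/2 * sin (pi * y / 2) * cos (pi * y / 2))) (at y)"
  unfolding F_eq_sin_squares[abs_def]
  by (auto intro!: derivative_eq_intros simp: field_simps)

definition phi_term :: "nat \<Rightarrow> real \<Rightarrow> real" where
  "phi_term i x = (2 * pi / 4 ^ i) *
      (sin (pi * (eta ^^ i) x) * cos (pi * (eta ^^ i) x)
       + 1/2 * sin (pi * (eta ^^ i) x / 2) * cos (pi * (eta ^^ i) x / 2))"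

lemma phi_eq_sum_phi_term: "phi N x = (\<Sum>i<Suc N. phi_term i x)"
  unfolding phi_def phi_term_def lessThan_Suc_atMost ..

lemma has_real_derivative_V2_term:
  "((\<lambda>x. F ((eta ^^ i) x) - 2 * mhat) has_real_derivative phi_term i x) (at x)"
proof -
  have "((eta ^^ i) has_real_derivative 1 / 4 ^ i) (at x)"
    unfolding funpow_eta[abs_def] by (auto intro!: derivative_eq_intros)
  from DERIV_chain2[OF has_real_derivative_F this] show ?thesis
    by (auto intro!: derivative_eq_intros simp: phi_term_def field_simps)
qed

lemma abs_phi_term_le: "\<bar>phi_term i x\<bar> \<le> 3 * pi * (1/4) ^ i"
proof -
  have sin_cos_le: "\<bar>sin b * cos b\<bar> \<le> 1" for b :: real
    by (simp add: abs_mult mult_le_one)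
  define a where "a = pi * (eta ^^ i) x"
  have "\<bar>phi_term i x\<bar> = (2 * pi / 4 ^ i) * \<bar>sin a * cos a + 1/2 * (sin (a/2) * cos (a/2))\<bar>"
    by (simp add: phi_term_def a_def[symmetric] abs_mult mult.assoc)
  also have "\<dots> \<le> (2 * pi / 4 ^ i) * (3/2)"
    using abs_triangle_ineq[of "sin a * cos a" "1/2 * (sin (a/2) * cos (a/2))"]
      sin_cos_le[of a] sin_cos_le[of "a/2"]
    by (intro mult_left_mono) (simp_all add: abs_mult)
  also have "\<dots> = 3 * pi * (1/4) ^ i"
    by (simp add: power_one_over)
  finally show ?thesis .
qed

lemma V2_has_real_derivative: "(V2 has_real_derivative (\<Sum>i. phi_term i x)) (at x)"
proof -
  have summable_bound: "summable (\<lambda>i. 3 * pi * (1/4::real) ^ i)"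
    by (intro summable_mult summable_geometric) auto
  have uniform: "uniform_limit UNIV (\<lambda>n x. \<Sum>i<n. phi_term i x) (\<lambda>x. \<Sum>i. phi_term i x) sequentially"
    using abs_phi_term_le by (intro Weierstrass_m_test[OF _ summable_bound]) simp
  have summable_at_fixpoint: "summable (\<lambda>i. F ((eta ^^ i) (2/3)) - 2 * mhat)"
    by (simp add: funpow_eta F_def mhat_def field_simps)
  obtain g where g: "\<And>y. (\<lambda>i. F ((eta ^^ i) y) - 2 * mhat) sums g y \<and>
      (g has_real_derivative (\<Sum>i. phi_term i y)) (at y)"
    using has_field_derivative_series[where f = "\<lambda>i y. F ((eta ^^ i) y) - 2 * mhat",
        OF convex_UNIV has_real_derivative_V2_term uniform UNIV_I summable_at_fixpoint]
    by auto
  have "V2 = g"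
    using g by (auto simp: fun_eq_iff V2_def sums_def intro: limI)
  with g show ?thesis
    by simp
qed

lemma abs_V2_deriv_minus_phi_le: "\<bar>(\<Sum>i. phi_term i x) - phi N x\<bar> \<le> pi / 4 ^ N"
proof -
  have "\<bar>(\<Sum>i. phi_term i x) - phi N x\<bar> \<le> (\<Sum>i. 3 * pi * (1/4) ^ (i + Suc N))"
    using norm_suminf_minus_sum_le[of "\<lambda>i. phi_term i x" "\<lambda>i. 3 * pi * (1/4) ^ i" "Suc N"]
      abs_phi_term_le summable_mult[OF summable_geometric[of "1/4 :: real"], of "3 * pi"]
    by (simp add: phi_eq_sum_phi_term)
  also have "\<dots> = pi / 4 ^ N"
    using sums_mult[OF sums_geometric_shift[of "1/4 :: real" "Suc N"], of "3 * pi"]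
    by (simp add: sums_iff power_one_over)
  finally show ?thesis .
qed

theorem mainTheorem11:
  shows "\<forall>x\<in>{0..1::real}. \<exists>D. (V2 has_real_derivative D) (at x within {0..1}) \<and>
           (\<forall>N::nat. \<bar>D - phi N x\<bar> \<le> 3 * pi * (\<Sum>i. if N \<le> i then 1 / 4 ^ i else 0)
                     \<and> 3 * pi * (\<Sum>i. if N \<le> i then 1 / 4 ^ i else 0) = pi / 4 powr (real N - 1))"
proof (intro ballI exI conjI allI)
  fix x :: real and N :: nat
  show "(V2 has_real_derivative (\<Sum>i. phi_term i x)) (at x within {0..1})"
    by (rule has_field_derivative_at_within[OF V2_has_real_derivative])
  have powr: "pi / 4 powr (real N - 1) = 4 * pi / 4 ^ N"
    by (simp add: powr_diff powr_realpow)
  have "(\<Sum>i. if N \<le> i then 1 / 4 ^ i else 0) = (1/4 :: real) ^ N / (1 - 1/4)"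
    using sums_geometric_tail[of "1/4 :: real" N] unfolding power_one_over by (simp add: sums_iff)
  then show tail: "3 * pi * (\<Sum>i. if N \<le> i then 1 / 4 ^ i else 0) = pi / 4 powr (real N - 1)"
    unfolding powr by (simp add: power_one_over)
  have "pi / 4 ^ N \<le> 4 * pi / 4 ^ N"
    by (simp add: divide_right_mono)
  with abs_V2_deriv_minus_phi_le show "\<bar>(\<Sum>i. phi_term i x) - phi N x\<bar>
      \<le> 3 * pi * (\<Sum>i. if N \<le> i then 1 / 4 ^ i else 0)"
    unfolding tail powr by (rule order.trans)
qed

end
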